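(* Let $(\mathfrak{g},\langle\cdot,\cdot\rangle)$ be a pseudo-Euclidean unimodular Lie algebra admitting a derivation with nonzero trace. Then $(\mathfrak{g},\langle\cdot,\cdot\rangle)$ is Einstein if and only if it is Ricci-flat.
   Context: A pseudo-Euclidean Lie algebra is a finite-dimensional real Lie algebra $\mathfrak{g}$ with a nondegenerate symmetric bilinear form $\langle\cdot,\cdot\rangle$ (equivalently, a left-invariant pseudo-Riemannian metric on a corresponding Lie group). Unimodular means $\mathrm{tr}(\mathrm{ad}_u)=0$ for all $u\in\mathfrak{g}$. The Levi-Civita product $\mathrm{L}$ is defined by $2\langle \mathrm{L}_uv,w\rangle=\langle[u,v],w\rangle+\langle[w,u],v\rangle+\langle[w,v],u\rangle$; the curvature is $K(u,v)=\mathrm{L}_{[u,v]}-[\mathrm{L}_u,\mathrm{L}_v]$; the Ricci curvature is $\mathrm{ric}(u,v)=\mathrm{tr}(w\mapsto K(u,w)v)$ and the Ricci operator $\mathrm{Ric}$ is defined by $\langle\mathrm{Ric}(u),v\rangle=\mathrm{ric}(u,v)$. The algebra is Einstein if $\mathrm{Ric}=\lambda\,\mathrm{Id}_{\mathfrak{g}}$ for some $\lambda\in\mathbb{R}$, and Ricci-flat if $\mathrm{Ric}=0$. *)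

theory Defs
  imports "HOL-Analysis.Analysis"
begin

text \<open>A finite-dimensional real Lie algebra is modelled as a Lie bracket on a
type of class euclidean_space (any finite-dimensional real vector space).\<close>

definition lie_algebra :: "('a::euclidean_space \<Rightarrow> 'a \<Rightarrow> 'a) \<Rightarrow> bool" where
  "lie_algebra br \<longleftrightarrow> bilinear br \<and> (\<forall>x. br x x = 0) \<and>
     (\<forall>x y z. br x (br y z) + br y (br z x) + br z (br x y) = 0)"

definition pseudo_metric :: "('a::euclidean_space \<Rightarrow> 'a \<Rightarrow> real) \<Rightarrow> bool" where
  "pseudo_metric B \<longleftrightarrow> bilinear B \<and> (\<forall>x y. B x y = B y x) \<and>
     (\<forall>x. (\<forall>y. B x y = 0) \<longrightarrow> x = 0)"

definition ltrace :: "('a::euclidean_space \<Rightarrow> 'a) \<Rightarrow> real" where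
  "ltrace f = (\<Sum>b\<in>Basis. inner (f b) b)"

definition unimodular :: "('a::euclidean_space \<Rightarrow> 'a \<Rightarrow> 'a) \<Rightarrow> bool" where
  "unimodular br \<longleftrightarrow> (\<forall>u. ltrace (br u) = 0)"

definition lie_derivation :: "('a::euclidean_space \<Rightarrow> 'a \<Rightarrow> 'a) \<Rightarrow> ('a \<Rightarrow> 'a) \<Rightarrow> bool" where
  "lie_derivation br D \<longleftrightarrow> linear D \<and> (\<forall>x y. D (br x y) = br (D x) y + br x (D y))"

definition levi_civita :: "('a::euclidean_space \<Rightarrow> 'a \<Rightarrow> 'a) \<Rightarrow> ('a \<Rightarrow> 'a \<Rightarrow> real) \<Rightarrow> 'a \<Rightarrow> 'a \<Rightarrow> 'a" where
  "levi_civita br B u v = (THE x. \<forall>w. 2 * B x w = B (br u v) w + B (br w u) v + B (br w v) u)"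

definition curvature :: "('a::euclidean_space \<Rightarrow> 'a \<Rightarrow> 'a) \<Rightarrow> ('a \<Rightarrow> 'a \<Rightarrow> real) \<Rightarrow> 'a \<Rightarrow> 'a \<Rightarrow> 'a \<Rightarrow> 'a" where
  "curvature br B u v w = levi_civita br B (br u v) w
     - (levi_civita br B u (levi_civita br B v w) - levi_civita br B v (levi_civita br B u w))"

definition ricci :: "('a::euclidean_space \<Rightarrow> 'a \<Rightarrow> 'a) \<Rightarrow> ('a \<Rightarrow> 'a \<Rightarrow> real) \<Rightarrow> 'a \<Rightarrow> 'a \<Rightarrow> real" where
  "ricci br B u v = ltrace (\<lambda>w. curvature br B u w v)"

definition ricci_op :: "('a::euclidean_space \<Rightarrow> 'a \<Rightarrow> 'a) \<Rightarrow> ('a \<Rightarrow> 'a \<Rightarrow> real) \<Rightarrow> 'a \<Rightarrow> 'a" where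
  "ricci_op br B u = (THE x. \<forall>v. B x v = ricci br B u v)"

definition einstein :: "('a::euclidean_space \<Rightarrow> 'a \<Rightarrow> 'a) \<Rightarrow> ('a \<Rightarrow> 'a \<Rightarrow> real) \<Rightarrow> bool" where
  "einstein br B \<longleftrightarrow> (\<exists>c::real. ricci_op br B = (\<lambda>u. c *\<^sub>R u))"

definition ricci_flat :: "('a::euclidean_space \<Rightarrow> 'a \<Rightarrow> 'a) \<Rightarrow> ('a \<Rightarrow> 'a \<Rightarrow> real) \<Rightarrow> bool" where
  "ricci_flat br B \<longleftrightarrow> ricci_op br B = (\<lambda>u. 0)"

end

theory Submission
  imports Defs
begin

(* For a derivation D of a unimodular metric Lie algebra, tr(Ric o D) = 0. In the unimodular case
     ric(u,v) = -1/2 tr(ad_u ad_v) - 1/2 tr(ad_v^* ad_u) - 1/4 tr(J_u J_v),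
   where <J_u x, y> = <u, [x,y]>; contracting with D, the Killing-form part vanishes because D
   is a derivation, while the Leibniz rule turns the J-part into -2 times the adjoint part, so the
   two cancel. If Ric = c Id then 0 = tr(Ric o D) = c tr D, hence c = 0 as soon as tr D <> 0. *)

lemma ltrace_add: "ltrace (\<lambda>w. f w + g w) = ltrace f + ltrace g"
  by (simp add: ltrace_def inner_add_left sum.distrib)

lemma ltrace_diff: "ltrace (\<lambda>w. f w - g w) = ltrace f - ltrace g"
  by (simp add: ltrace_def inner_diff_left sum_subtractf)

lemma ltrace_scale: "ltrace (\<lambda>w. c *\<^sub>R f w) = c * ltrace f"
  by (simp add: ltrace_def sum_distrib_left)

lemma ltrace_neg: "ltrace (\<lambda>w. - f w) = - ltrace f"
  by (simp add: ltrace_def sum_negf)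

lemma ltrace_comp_commute:
  fixes X Y :: "'a::euclidean_space \<Rightarrow> 'a"
  assumes "linear X" "linear Y"
  shows "ltrace (\<lambda>w. X (Y w)) = ltrace (\<lambda>w. Y (X w))"
proof -
  have entries: "ltrace (\<lambda>w. F (G w)) = (\<Sum>b\<in>Basis. \<Sum>c\<in>Basis. inner (G b) c * inner (F c) b)"
    if "linear F" for F G :: "'a \<Rightarrow> 'a"
    unfolding ltrace_def
  proof (rule sum.cong[OF refl])
    fix b :: 'a
    have "F (G b) = F (\<Sum>c\<in>Basis. inner (G b) c *\<^sub>R c)" by (simp add: euclidean_representation)
    also have "\<dots> = (\<Sum>c\<in>Basis. inner (G b) c *\<^sub>R F c)"
      by (simp add: linear_sum[OF that] linear_scale[OF that])
    finally show "inner (F (G b)) b = (\<Sum>c\<in>Basis. inner (G b) c * inner (F c) b)"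
      by (simp add: inner_sum_left)
  qed
  show ?thesis
    unfolding entries[OF assms(1)] entries[OF assms(2)]
    by (subst sum.swap) (simp add: mult.commute)
qed

locale nondegenerate_form =
  fixes B :: "'a::euclidean_space \<Rightarrow> 'a \<Rightarrow> real"
  assumes bilinear_B: "bilinear B"
    and B_sym: "B x y = B y x"
    and B_nondegenerate: "(\<forall>y. B x y = 0) \<Longrightarrow> x = 0"
begin

lemma linear_B_left: "linear (\<lambda>x. B x y)"
  using bilinear_B by (simp add: bilinear_def)

lemma linear_B_right: "linear (B x)"
  using bilinear_B by (simp add: bilinear_def)

lemma B_scaleR: "B (c *\<^sub>R x) y = c * B x y" "B x (c *\<^sub>R y) = c * B x y"
  using bilinear_lmul[OF bilinear_B] bilinear_rmul[OF bilinear_B] by auto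

lemmas B_simps = bilinear_ladd[OF bilinear_B] bilinear_radd[OF bilinear_B] B_scaleR
  bilinear_lneg[OF bilinear_B] bilinear_rneg[OF bilinear_B]
  bilinear_lsub[OF bilinear_B] bilinear_rsub[OF bilinear_B]
  bilinear_lzero[OF bilinear_B] bilinear_rzero[OF bilinear_B]
  linear_sum[OF linear_B_right] linear_sum[OF linear_B_left]

lemma B_eqI: "(\<And>z. B p z = B q z) \<Longrightarrow> p = q"
  using B_nondegenerate[of "p - q"] by (simp add: B_simps)

text \<open>For b in Basis, raise b is the B-dual basis vector: B x (raise b) is the b-coordinate of x.\<close>

definition lower :: "'a \<Rightarrow> 'a" where
  "lower x = (\<Sum>b\<in>Basis. B x b *\<^sub>R b)"

lemma inner_lower: "inner (lower x) y = B x y"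
proof -
  have "B x y = B x (\<Sum>b\<in>Basis. inner y b *\<^sub>R b)" by (simp add: euclidean_representation)
  also have "\<dots> = inner (lower x) y"
    unfolding lower_def inner_sum_left by (simp add: B_simps inner_commute mult.commute)
  finally show ?thesis by simp
qed

lemma linear_lower: "linear lower"
  by (rule linearI) (simp_all add: lower_def B_simps scaleR_add_left sum.distrib scaleR_sum_right)

lemma inj_lower: "inj lower"
  by (rule injI, rule B_eqI) (metis inner_lower)

definition raise :: "'a \<Rightarrow> 'a" where
  "raise = (SOME g. linear g \<and> (\<forall>x. g (lower x) = x) \<and> (\<forall>x. lower (g x) = x))"

lemma raise_props: "linear raise \<and> (\<forall>x. raise (lower x) = x) \<and> (\<forall>x. lower (raise x) = x)"
proof -
  have "\<exists>g. linear g \<and> (\<forall>x. g (lower x) = x) \<and> (\<forall>x. lower (g x) = x)"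
    using linear_injective_isomorphism[OF linear_lower inj_lower] by blast
  then show ?thesis unfolding raise_def by (rule someI_ex)
qed

lemma linear_raise: "linear raise"
  and raise_lower: "raise (lower x) = x"
  and lower_raise: "lower (raise x) = x"
  using raise_props by blast+

lemma B_raise_left: "B (raise z) y = inner z y"
  by (metis lower_raise inner_lower)

lemma B_raise_right: "B x (raise z) = inner z x"
  by (metis B_sym B_raise_left)

lemma dual_basis_expansion: "(\<Sum>b\<in>Basis. B x (raise b) *\<^sub>R b) = x"
  by (simp add: B_raise_right inner_commute[of _ x] euclidean_representation)

lemma ltrace_eq_sum_B: "ltrace X = (\<Sum>b\<in>Basis. B (X b) (raise b))"
  by (simp add: ltrace_def B_raise_right inner_commute)

lemma sum_B_raise_apply:
  assumes "linear D"
  shows "(\<Sum>b\<in>Basis. B (raise b) x * B (D b) y) = B (D x) y"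
proof -
  have "D x = (\<Sum>b\<in>Basis. B x (raise b) *\<^sub>R D b)"
    by (subst dual_basis_expansion[of x, symmetric])
       (simp add: linear_sum[OF assms] linear_scale[OF assms])
  then show ?thesis by (simp add: B_simps B_sym[of x])
qed

lemma sum_bilinear_raise_swap:
  fixes \<beta> :: "'a \<Rightarrow> 'a \<Rightarrow> real"
  assumes "bilinear \<beta>"
  shows "(\<Sum>b\<in>Basis. \<beta> b (raise b)) = (\<Sum>b\<in>Basis. \<beta> (raise b) b)"
proof -
  have lin_right: "linear (\<beta> x)" and lin_left: "linear (\<lambda>x. \<beta> x y)" for x y
    using assms by (simp_all add: bilinear_def)
  have expand_raise: "raise b = (\<Sum>k\<in>Basis. B (raise b) (raise k) *\<^sub>R k)" for b
    by (rule dual_basis_expansion[symmetric])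
  have "(\<Sum>b\<in>Basis. \<beta> (raise b) b) = (\<Sum>b\<in>Basis. \<Sum>k\<in>Basis. B (raise b) (raise k) * \<beta> k b)"
    by (subst expand_raise) (simp add: linear_sum[OF lin_left] linear_scale[OF lin_left])
  also have "\<dots> = (\<Sum>k\<in>Basis. \<Sum>b\<in>Basis. B (raise k) (raise b) * \<beta> k b)"
    by (subst sum.swap) (simp add: B_sym)
  also have "\<dots> = (\<Sum>b\<in>Basis. \<beta> b (raise b))"
    by (subst (2) expand_raise) (simp add: linear_sum[OF lin_right] linear_scale[OF lin_right])
  finally show ?thesis by simp
qed

definition representer :: "('a \<Rightarrow> real) \<Rightarrow> 'a" where
  "representer \<phi> = raise (\<Sum>b\<in>Basis. \<phi> b *\<^sub>R b)"

lemma B_representer: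
  assumes "linear \<phi>"
  shows "B (representer \<phi>) y = \<phi> y"
proof -
  have "\<phi> y = (\<Sum>b\<in>Basis. \<phi> b * inner b y)"
    by (subst euclidean_representation[of y, symmetric])
       (simp add: linear_sum[OF assms] linear_scale[OF assms] inner_commute mult.commute)
  then show ?thesis by (simp add: representer_def B_raise_left inner_sum_left)
qed

definition adjoint :: "('a \<Rightarrow> 'a) \<Rightarrow> 'a \<Rightarrow> 'a" where
  "adjoint A x = representer (\<lambda>y. B x (A y))"

lemma B_adjoint_left:
  assumes "linear A"
  shows "B (adjoint A x) y = B x (A y)"
  unfolding adjoint_def
  by (rule B_representer) (rule linear_compose[OF assms linear_B_right, unfolded o_def])

lemma B_adjoint_right:
  assumes "linear A"
  shows "B y (adjoint A x) = B (A y) x"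
  using B_adjoint_left[OF assms] B_sym by metis

lemma linear_adjoint:
  assumes "linear A"
  shows "linear (adjoint A)"
  by (rule linearI; rule B_eqI) (simp_all add: B_adjoint_left[OF assms] B_simps)

lemma adjoint_comp:
  assumes "linear X" "linear Y"
  shows "adjoint (\<lambda>w. Y (X w)) a = adjoint X (adjoint Y a)"
proof -
  have "linear (\<lambda>w. Y (X w))" using linear_compose[OF assms] by (simp add: o_def)
  then show ?thesis by (intro B_eqI) (simp add: B_adjoint_left assms)
qed

lemma adjoint_adjoint:
  assumes "linear X"
  shows "adjoint (adjoint X) a = X a"
  by (rule B_eqI) (simp add: B_adjoint_left B_adjoint_right assms linear_adjoint)

text \<open>adjoint X is conjugate, via lower, to the Euclidean transpose of X.\<close>

lemma ltrace_adjoint: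
  assumes "linear X"
  shows "ltrace (adjoint X) = ltrace X"
proof -
  have lin: "linear (\<lambda>w. X (raise w))"
    using linear_compose[OF linear_raise assms] by (simp add: o_def)
  have "ltrace (adjoint X) = (\<Sum>b\<in>Basis. inner (lower (X (raise b))) b)"
    unfolding ltrace_eq_sum_B
    by (rule sum.cong[OF refl]) (metis B_adjoint_left[OF assms] inner_lower B_sym)
  also have "\<dots> = ltrace (\<lambda>w. lower (X (raise w)))" by (simp add: ltrace_def)
  also have "\<dots> = ltrace (\<lambda>w. X (raise (lower w)))"
    by (rule ltrace_comp_commute[OF linear_lower lin])
  finally show ?thesis by (simp add: raise_lower)
qed

lemma ltrace_adjoint_comp:
  assumes "linear X" "linear Y"
  shows "ltrace (\<lambda>w. adjoint X (adjoint Y w)) = ltrace (\<lambda>w. Y (X w))"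
proof -
  have "linear (\<lambda>w. Y (X w))" using linear_compose[OF assms] by (simp add: o_def)
  moreover have "(\<lambda>w. adjoint X (adjoint Y w)) = adjoint (\<lambda>w. Y (X w))"
    by (simp add: adjoint_comp assms fun_eq_iff)
  ultimately show ?thesis by (simp add: ltrace_adjoint)
qed

lemma ltrace_skew_adjoint:
  assumes "linear X" "\<And>x. adjoint X x = - X x"
  shows "ltrace X = 0"
proof -
  have "adjoint X = (\<lambda>x. - X x)" using assms(2) by (rule ext)
  then have "ltrace X = ltrace (\<lambda>x. - X x)" using ltrace_adjoint[OF assms(1)] by simp
  then show ?thesis by (simp add: ltrace_neg)
qed

end

locale metric_skew_algebra = nondegenerate_form B for B +
  fixes br :: "'a \<Rightarrow> 'a \<Rightarrow> 'a"
  assumes bilinear_br: "bilinear br"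
    and br_self: "br x x = 0"
begin

lemma linear_br: "linear (br u)"
  using bilinear_br by (simp add: bilinear_def)

lemma linear_br_left: "linear (\<lambda>x. br x v)"
  using bilinear_br by (simp add: bilinear_def)

lemmas br_simps = bilinear_ladd[OF bilinear_br] bilinear_radd[OF bilinear_br]
  bilinear_lmul[OF bilinear_br] bilinear_rmul[OF bilinear_br]
  bilinear_lneg[OF bilinear_br] bilinear_rneg[OF bilinear_br]
  bilinear_lsub[OF bilinear_br] bilinear_rsub[OF bilinear_br]
  bilinear_lzero[OF bilinear_br] bilinear_rzero[OF bilinear_br]
  linear_sum[OF linear_br] linear_sum[OF linear_br_left]

lemma br_antisym: "br y x = - br x y"
proof -
  have "br (x + y) (x + y) = br x x + br x y + (br y x + br y y)"
    by (simp add: br_simps algebra_simps)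
  then show ?thesis by (simp add: br_self eq_neg_iff_add_eq_0 add.commute)
qed

lemma linear_adjoint_br: "linear (adjoint (br u))"
  by (rule linear_adjoint[OF linear_br])

definition J :: "'a \<Rightarrow> 'a \<Rightarrow> 'a" where
  "J u x = adjoint (br x) u"

lemma B_J: "B (J u x) y = B u (br x y)"
  by (simp add: J_def B_adjoint_left linear_br)

lemma linear_J: "linear (J u)"
  by (rule linearI; rule B_eqI) (simp_all add: B_J B_simps br_simps)

lemma adjoint_J: "adjoint (J u) x = - J u x"
  by (rule B_eqI) (simp add: B_adjoint_left linear_J B_J B_simps B_sym[of x] br_antisym[of _ x])

lemma ltrace_J: "ltrace (J u) = 0"
  by (rule ltrace_skew_adjoint[OF linear_J adjoint_J])

lemma levi_civita_eq: "levi_civita br B u v = (1/2) *\<^sub>R (br u v - adjoint (br u) v - J u v)"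
  unfolding levi_civita_def
proof (rule the_equality)
  have koszul: "B (br u v - adjoint (br u) v - J u v) w = B (br u v) w + B (br w u) v + B (br w v) u"
    for w
    by (simp add: B_simps B_adjoint_left linear_br B_J br_antisym[of w] B_sym[of _ u] B_sym[of _ v])
  show "\<forall>w. 2 * B ((1/2) *\<^sub>R (br u v - adjoint (br u) v - J u v)) w
      = B (br u v) w + B (br w u) v + B (br w v) u"
    by (simp add: B_scaleR koszul)
  fix x assume koszul_x: "\<forall>w. 2 * B x w = B (br u v) w + B (br w u) v + B (br w v) u"
  show "x = (1/2) *\<^sub>R (br u v - adjoint (br u) v - J u v)"
    by (rule B_eqI) (simp add: B_scaleR koszul koszul_x[rule_format, symmetric])
qed

lemma levi_civita_eq_first_arg:
  "levi_civita br B w x = (1/2) *\<^sub>R (- br x w - J x w - adjoint (br x) w)"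
  by (simp add: levi_civita_eq J_def br_antisym[of x w])

lemma linear_levi_civita: "linear (levi_civita br B u)"
  unfolding levi_civita_eq
  by (rule linearI)
     (simp_all add: br_simps linear_add[OF linear_adjoint_br] linear_scale[OF linear_adjoint_br]
       linear_add[OF linear_J] linear_scale[OF linear_J] algebra_simps)

lemma linear_curvature: "linear (curvature br B u w)"
  unfolding curvature_def
  by (rule linearI)
     (simp_all add: linear_add[OF linear_levi_civita] linear_scale[OF linear_levi_civita]
       algebra_simps)

lemma linear_ricci: "linear (ricci br B u)"
proof (rule linearI)
  fix x y :: 'a and c :: real
  have "curvature br B u w (x + y) = curvature br B u w x + curvature br B u w y"
    and "curvature br B u w (c *\<^sub>R x) = c *\<^sub>R curvature br B u w x" for w
    by (simp_all add: linear_add[OF linear_curvature] linear_scale[OF linear_curvature])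
  then show "ricci br B u (x + y) = ricci br B u x + ricci br B u y"
    and "ricci br B u (c *\<^sub>R x) = c *\<^sub>R ricci br B u x"
    by (simp_all only: ricci_def ltrace_add ltrace_scale) simp
qed

lemma B_ricci_op: "B (ricci_op br B u) v = ricci br B u v"
proof -
  have "ricci_op br B u = representer (ricci br B u)"
    unfolding ricci_op_def
  proof (rule the_equality)
    show "\<forall>v. B (representer (ricci br B u)) v = ricci br B u v"
      by (simp add: B_representer linear_ricci)
    show "x = representer (ricci br B u)" if "\<forall>v. B x v = ricci br B u v" for x
      using that by (intro B_eqI) (simp add: B_representer linear_ricci)
  qed
  then show ?thesis by (simp add: B_representer linear_ricci)
qed

lemma ltrace_levi_civita_bracket:
  "ltrace (\<lambda>w. levi_civita br B (br u w) v) = - (1/2) * ltrace (\<lambda>w. br v (br u w))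
     - (1/2) * ltrace (\<lambda>w. J v (br u w)) - (1/2) * ltrace (\<lambda>w. adjoint (br v) (br u w))"
  by (simp only: levi_civita_eq_first_arg ltrace_scale ltrace_diff ltrace_neg) simp

lemma ltrace_levi_civita_first_arg:
  assumes "\<And>u. ltrace (br u) = 0"
  shows "ltrace (\<lambda>w. levi_civita br B w x) = 0"
proof -
  have "ltrace (adjoint (br x)) = 0" by (simp add: ltrace_adjoint linear_br assms)
  then show ?thesis
    by (simp add: levi_civita_eq_first_arg ltrace_scale ltrace_diff ltrace_neg ltrace_J assms)
qed

lemma ltrace_levi_civita_comp:
  "ltrace (\<lambda>w. levi_civita br B u (levi_civita br B w v))
     = (1/4) * ltrace (\<lambda>w. J u (J v w)) - (1/2) * ltrace (\<lambda>w. J v (br u w))"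
proof -
  have expand: "levi_civita br B u (levi_civita br B w v) = (1/4) *\<^sub>R
      (- br u (br v w) - br u (J v w) - br u (adjoint (br v) w)
       + adjoint (br u) (br v w) + adjoint (br u) (J v w) + adjoint (br u) (adjoint (br v) w)
       + J u (br v w) + J u (J v w) + J u (adjoint (br v) w))" for w
    unfolding levi_civita_eq_first_arg[of w v] levi_civita_eq[of u]
    by (simp add: br_simps linear_add[OF linear_adjoint_br] linear_diff[OF linear_adjoint_br]
        linear_neg[OF linear_adjoint_br] linear_scale[OF linear_adjoint_br]
        linear_add[OF linear_J] linear_diff[OF linear_J] linear_neg[OF linear_J]
        linear_scale[OF linear_J] algebra_simps)
  have adjoint_adjoint_br: "adjoint (adjoint (br v)) = br v"
    by (simp add: fun_eq_iff adjoint_adjoint linear_br)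
  have adjoint_adjoint_J: "adjoint (adjoint (J v)) = J v" for v
    by (simp add: fun_eq_iff adjoint_adjoint linear_J)
  have tr_br_J: "ltrace (\<lambda>w. br u (J v w)) = ltrace (\<lambda>w. J v (br u w))"
    by (rule ltrace_comp_commute[OF linear_br linear_J])
  have tr_br_adjoint: "ltrace (\<lambda>w. br u (adjoint (br v) w)) = ltrace (\<lambda>w. adjoint (br v) (br u w))"
    by (rule ltrace_comp_commute[OF linear_br linear_adjoint_br])
  have tr_adjoint_br: "ltrace (\<lambda>w. adjoint (br u) (br v w)) = ltrace (\<lambda>w. adjoint (br v) (br u w))"
    using ltrace_adjoint_comp[OF linear_br linear_adjoint_br, of u v] by (simp add: adjoint_adjoint_br)
  have tr_adjoint_J: "ltrace (\<lambda>w. adjoint (br u) (J v w)) = - ltrace (\<lambda>w. J v (br u w))"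
    for u v using ltrace_adjoint_comp[OF linear_br linear_adjoint[OF linear_J], of u v]
    by (simp add: adjoint_adjoint_J adjoint_J ltrace_neg)
  have tr_adjoint_adjoint: "ltrace (\<lambda>w. adjoint (br u) (adjoint (br v) w)) = ltrace (\<lambda>w. br u (br v w))"
    by (simp add: ltrace_adjoint_comp linear_br ltrace_comp_commute[OF linear_br linear_br])
  have tr_J_adjoint: "ltrace (\<lambda>w. J u (adjoint (br v) w)) = - ltrace (\<lambda>w. J u (br v w))"
    using ltrace_comp_commute[OF linear_J linear_adjoint_br, of u v] tr_adjoint_J[of v u] by simp
  show ?thesis
    unfolding expand
    by (simp add: ltrace_add ltrace_diff ltrace_scale ltrace_neg tr_br_J tr_br_adjoint
        tr_adjoint_br tr_adjoint_J tr_adjoint_adjoint tr_J_adjoint)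
qed

lemma ricci_unimodular:
  assumes "\<And>u. ltrace (br u) = 0"
  shows "ricci br B u v = - (1/2) * ltrace (\<lambda>w. br u (br v w))
     - (1/2) * ltrace (\<lambda>w. adjoint (br v) (br u w)) - (1/4) * ltrace (\<lambda>w. J u (J v w))"
  unfolding ricci_def curvature_def
  by (simp add: ltrace_diff ltrace_add ltrace_levi_civita_bracket ltrace_levi_civita_comp
      ltrace_levi_civita_first_arg[OF assms] ltrace_comp_commute[OF linear_br linear_br, of v u])

lemma ltrace_J_comp:
  "ltrace (\<lambda>w. J u (J v w))
     = (\<Sum>c\<in>Basis. \<Sum>k\<in>Basis. B v (br c (raise k)) * B u (br k (raise c)))"
  unfolding ltrace_eq_sum_B
proof (rule sum.cong[OF refl])
  fix c :: 'a
  have "J v c = (\<Sum>k\<in>Basis. B v (br c (raise k)) *\<^sub>R k)"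
    by (subst dual_basis_expansion[of "J v c", symmetric]) (simp add: B_J)
  then show "B (J u (J v c)) (raise c) = (\<Sum>k\<in>Basis. B v (br c (raise k)) * B u (br k (raise c)))"
    by (simp add: B_J br_simps B_simps)
qed

end

locale metric_skew_algebra_derivation = metric_skew_algebra B br for B br +
  fixes D :: "'a \<Rightarrow> 'a"
  assumes linear_D: "linear D"
    and D_br: "D (br x y) = br (D x) y + br x (D y)"
begin

lemmas D_simps = linear_add[OF linear_D] linear_scale[OF linear_D] linear_diff[OF linear_D]
  linear_neg[OF linear_D] linear_sum[OF linear_D]

definition D_pairing :: real where
  "D_pairing = (\<Sum>b\<in>Basis. \<Sum>c\<in>Basis. B (br (D b) c) (br (raise b) (raise c)))"

lemma sum_ltrace_ad_D: "(\<Sum>b\<in>Basis. ltrace (\<lambda>w. br (D b) (br (raise b) w))) = 0"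
proof -
  have "(\<Sum>b\<in>Basis. ltrace (\<lambda>w. br b (D (br (raise b) w))))
      = (\<Sum>b\<in>Basis. ltrace (\<lambda>w. br (raise b) (D (br b w))))"
    by (rule sum_bilinear_raise_swap[of "\<lambda>x y. ltrace (\<lambda>w. br x (D (br y w)))", simplified])
       (auto simp: bilinear_def br_simps D_simps ltrace_add ltrace_scale intro!: linearI)
  also have "\<dots> = (\<Sum>b\<in>Basis. ltrace (\<lambda>w. D (br b (br (raise b) w))))"
  proof (rule sum.cong[OF refl])
    fix b :: 'a
    have "linear (\<lambda>w. D (br b w))" using linear_compose[OF linear_br linear_D] by (simp add: o_def)
    then show "ltrace (\<lambda>w. br (raise b) (D (br b w))) = ltrace (\<lambda>w. D (br b (br (raise b) w)))"
      by (rule ltrace_comp_commute[OF linear_br])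
  qed
  finally show ?thesis
    by (simp add: D_br[symmetric, THEN eq_diff_eq[THEN iffD2]] ltrace_diff sum_subtractf)
qed

lemma sum_ltrace_adjoint_ad_D:
  "(\<Sum>b\<in>Basis. ltrace (\<lambda>w. adjoint (br (raise b)) (br (D b) w))) = D_pairing"
  unfolding D_pairing_def by (simp add: ltrace_eq_sum_B B_adjoint_left linear_br)

lemma sum_bracket_D_first:
  "(\<Sum>c\<in>Basis. \<Sum>k\<in>Basis. B (br (D c) (raise k)) (br k (raise c))) = - D_pairing"
proof -
  have "(\<Sum>k\<in>Basis. B (br (D c) (raise k)) (br k (raise c)))
      = - (\<Sum>k\<in>Basis. B (br (D c) k) (br (raise c) (raise k)))" for c
  proof -
    have "(\<Sum>k\<in>Basis. B (br (D c) (raise k)) (br k (raise c)))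
        = (\<Sum>k\<in>Basis. B (br (D c) k) (br (raise k) (raise c)))"
      by (rule sum_bilinear_raise_swap[of "\<lambda>x y. B (br (D c) y) (br x (raise c))", simplified])
         (auto simp: bilinear_def br_simps B_simps intro!: linearI)
    then show ?thesis by (simp add: br_antisym[of "raise k" "raise c" for k] B_simps sum_negf)
  qed
  then show ?thesis unfolding D_pairing_def by (simp add: sum_negf)
qed

lemma sum_bracket_D_second:
  "(\<Sum>c\<in>Basis. \<Sum>k\<in>Basis. B (br c (D (raise k))) (br k (raise c))) = - D_pairing"
proof -
  have "(\<Sum>k\<in>Basis. B (br c (D (raise k))) (br k (raise c)))
      = (\<Sum>k\<in>Basis. B (br c (D k)) (br (raise k) (raise c)))" for c
    by (rule sum_bilinear_raise_swap[of "\<lambda>x y. B (br c (D y)) (br x (raise c))", simplified])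
       (auto simp: bilinear_def br_simps B_simps D_simps intro!: linearI)
  then have "(\<Sum>c\<in>Basis. \<Sum>k\<in>Basis. B (br c (D (raise k))) (br k (raise c)))
      = (\<Sum>c\<in>Basis. \<Sum>k\<in>Basis. B (br c (D k)) (br (raise k) (raise c)))"
    by simp
  also have "\<dots> = (\<Sum>k\<in>Basis. \<Sum>c\<in>Basis. B (br c (D k)) (br (raise k) (raise c)))"
    by (rule sum.swap)
  also have "\<dots> = (\<Sum>k\<in>Basis. \<Sum>c\<in>Basis. B (br (raise c) (D k)) (br (raise k) c))"
  proof (rule sum.cong[OF refl])
    fix k :: 'a
    show "(\<Sum>c\<in>Basis. B (br c (D k)) (br (raise k) (raise c)))
        = (\<Sum>c\<in>Basis. B (br (raise c) (D k)) (br (raise k) c))"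
      by (rule sum_bilinear_raise_swap[of "\<lambda>x y. B (br x (D k)) (br (raise k) y)", simplified])
         (auto simp: bilinear_def br_simps B_simps intro!: linearI)
  qed
  also have "\<dots> = (\<Sum>k\<in>Basis. \<Sum>c\<in>Basis. B (br (D k) (raise c)) (br c (raise k)))"
    by (simp add: br_antisym[of "raise c" "D k" for c k] br_antisym[of "raise k" c for c k] B_simps)
  finally show ?thesis by (simp add: sum_bracket_D_first)
qed

lemma sum_ltrace_J_D: "(\<Sum>b\<in>Basis. ltrace (\<lambda>w. J (D b) (J (raise b) w))) = - 2 * D_pairing"
proof -
  have "(\<Sum>b\<in>Basis. ltrace (\<lambda>w. J (D b) (J (raise b) w)))
      = (\<Sum>b\<in>Basis. \<Sum>c\<in>Basis. \<Sum>k\<in>Basis.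
           B (raise b) (br c (raise k)) * B (D b) (br k (raise c)))"
    by (simp add: ltrace_J_comp)
  also have "\<dots> = (\<Sum>c\<in>Basis. \<Sum>k\<in>Basis. \<Sum>b\<in>Basis.
           B (raise b) (br c (raise k)) * B (D b) (br k (raise c)))"
    by (subst sum.swap, rule sum.cong[OF refl], rule sum.swap)
  also have "\<dots> = (\<Sum>c\<in>Basis. \<Sum>k\<in>Basis. B (D (br c (raise k))) (br k (raise c)))"
    by (simp add: sum_B_raise_apply[OF linear_D])
  also have "\<dots> = (\<Sum>c\<in>Basis. \<Sum>k\<in>Basis. B (br (D c) (raise k)) (br k (raise c)))
       + (\<Sum>c\<in>Basis. \<Sum>k\<in>Basis. B (br c (D (raise k))) (br k (raise c)))"
    by (simp add: D_br B_simps sum.distrib)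
  finally show ?thesis by (simp add: sum_bracket_D_first sum_bracket_D_second)
qed

theorem ltrace_ricci_op_comp_derivation:
  assumes "\<And>u. ltrace (br u) = 0"
  shows "ltrace (\<lambda>x. ricci_op br B (D x)) = 0"
proof -
  have "ltrace (\<lambda>x. ricci_op br B (D x)) = (\<Sum>b\<in>Basis. ricci br B (D b) (raise b))"
    by (simp add: ltrace_eq_sum_B B_ricci_op)
  also have "\<dots> = - (1/2) * (\<Sum>b\<in>Basis. ltrace (\<lambda>w. br (D b) (br (raise b) w)))
     - (1/2) * (\<Sum>b\<in>Basis. ltrace (\<lambda>w. adjoint (br (raise b)) (br (D b) w)))
     - (1/4) * (\<Sum>b\<in>Basis. ltrace (\<lambda>w. J (D b) (J (raise b) w)))"
    by (simp add: ricci_unimodular[OF assms] sum_subtractf sum_distrib_left sum_negf)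
  also have "\<dots> = 0"
    by (simp add: sum_ltrace_ad_D sum_ltrace_adjoint_ad_D sum_ltrace_J_D)
  finally show ?thesis .
qed

end

theorem proposition3p2:
  fixes br :: "'a::euclidean_space \<Rightarrow> 'a \<Rightarrow> 'a"
    and B :: "'a \<Rightarrow> 'a \<Rightarrow> real"
  assumes "lie_algebra br"
    and "pseudo_metric B"
    and "unimodular br"
    and "\<exists>D. lie_derivation br D \<and> ltrace D \<noteq> 0"
  shows "einstein br B \<longleftrightarrow> ricci_flat br B"
proof
  from assms(4) obtain D where "lie_derivation br D" and trace_D: "ltrace D \<noteq> 0" by blast
  then interpret metric_skew_algebra_derivation B br D
    using assms(1,2) by unfold_locales
      (auto simp: lie_algebra_def pseudo_metric_def lie_derivation_def linear_add linear_scale)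
  assume "einstein br B"
  then obtain c where Ric: "ricci_op br B = (\<lambda>u. c *\<^sub>R u)" by (auto simp: einstein_def)
  have "c * ltrace D = ltrace (\<lambda>x. ricci_op br B (D x))" by (simp add: Ric ltrace_scale)
  also have "\<dots> = 0"
    using assms(3) by (intro ltrace_ricci_op_comp_derivation) (simp add: unimodular_def)
  finally show "ricci_flat br B" using trace_D by (simp add: ricci_flat_def Ric)
next
  assume "ricci_flat br B"
  then show "einstein br B" by (auto simp: einstein_def ricci_flat_def intro: exI[of _ 0])
qed

end
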